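(* Assume the recursive Laplacians $\mathbf{L}^{(H)}$ and operators $\mathbf{M}^{(H)}$ below, and suppose that for every non-root node $D$, $\widetilde{\mathrm{SC}}(\mathbf{L}^{(D)},\partial D)\approx_{\epsilon}\mathrm{SC}(\mathbf{L}^{(D)},\partial D)$. Then for every node $H$ at level $i$ of $\mathcal{T}$ and every vector $\mathbf{z}$, \[\|\mathbf{M}^{(H)}\mathbf{z}\|_2^2\le e^{i\epsilon}\,\mathbf{z}^\top\mathbf{L}^{(H)}\mathbf{z}=e^{i\epsilon}\,\mathcal{E}_{\mathbf{L}^{(H)}}(\mathbf{L}^{(H)}\mathbf{z}).\]
   Context: Setup. $G=(V,E)$ is a connected undirected graph with positive edge weights, $\mathbf{W}=\mathrm{diag}(\mathbf{w})$, signed incidence matrix $\mathbf{B}\in\mathbb{R}^{E\times V}$; for a region (edge-induced subgraph) $H$, $\mathbf{B}[H]$ is $\mathbf{B}$ with rows of edges not in $E(H)$ set to zero. All matrices/vectors are padded with zeros to $V$- or $E$-indexed dimensions; $\mathbf{M}^{-1}$ is the Moore–Penrose pseudoinverse; $\mathbf{A}\approx_t\mathbf{B}$ means $e^{-t}\mathbf{A}\preceq\mathbf{B}\preceq e^{t}\mathbf{A}$; for a Laplacian $\mathbf{L}$ supported on $U$ and $C\subseteq U$, $F=U\setminus C$, $\mathrm{SC}(\mathbf{L},C)=\mathbf{L}_{C,C}-\mathbf{L}_{C,F}\mathbf{L}_{F,F}^{-1}\mathbf{L}_{F,C}$; energy $\mathcal{E}_{\mathbf{L}}(\mathbf{d})=\mathbf{d}^\top\mathbf{L}^{-1}\mathbf{d}$.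 $\mathcal{T}$ is a separator tree of $G$: a rooted binary tree of regions $H$ with vertex sets $\partial H$, $S(H)$, $F_H$, where the root is $G$ with $\partial G=\emptyset$, $F_G=S(G)$; a non-leaf node $H$ has two children $D_1,D_2$ whose edge sets partition $E(H)$ with $V(D_1)\cap V(D_2)=S(H)$, $\partial D_j=(\partial H\cup S(H))\cap V(D_j)$, $F_H=S(H)\setminus\partial H$; a leaf has constantly many edges, $S(H)=\emptyset$, $F_H=V(H)\setminus\partial H$. The level of a node is the maximum number of edges on a tree path from it down to a descendant (leaves have level 0). Recursive Laplacians. For a leaf $H$, $\mathbf{L}^{(H)}=\mathbf{B}[H]^\top\mathbf{W}\mathbf{B}[H]$. For each node $D$ we are given a Laplacian $\widetilde{\mathrm{SC}}(\mathbf{L}^{(D)},\partial D)$ supported on $\partial D$; for a non-leaf $H$ with children $D_1,D_2$, $\mathbf{L}^{(H)}=\widetilde{\mathrm{SC}}(\mathbf{L}^{(D_1)},\partial D_1)+\widetilde{\mathrm{SC}}(\mathbf{L}^{(D_2)},\partial D_2)$. Assume each $\mathbf{L}^{(H)}$ is the Laplacian of a connected graph on vertex set $\partial H\cup F_H$. Operators. For a node $D$ with parent $P$, the edge operator is $\mathbf{M}_{(D,P)}=(\mathbf{L}^{(D)})^{-1}\widetilde{\mathrm{SC}}(\mathbf{L}^{(D)},\partial D)$. Define $\mathbf{M}^{(H)}=\mathbf{W}^{1/2}\mathbf{B}[H]$ for a leaf $H$, and $\mathbf{M}^{(H)}=\mathbf{M}^{(D_1)}\mathbf{M}_{(D_1,H)}+\mathbf{M}^{(D_2)}\mathbf{M}_{(D_2,H)}$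 for a non-leaf $H$ with children $D_1,D_2$. *)

theory Defs
  imports "HOL-Analysis.Analysis"
begin

text \<open>All vectors/matrices are indexed by the finite types 'v (vertices) and 'e (edges),
  i.e. they are automatically "padded with zeros" to V- or E-indexed dimensions.\<close>

definition loewner_le :: "real^'n^'n \<Rightarrow> real^'n^'n \<Rightarrow> bool" (infix "\<preceq>\<^sub>L" 50) where
  "A \<preceq>\<^sub>L B \<longleftrightarrow> (\<forall>x. x \<bullet> (A *v x) \<le> x \<bullet> (B *v x))"

definition spec_approx :: "real^'n^'n \<Rightarrow> real \<Rightarrow> real^'n^'n \<Rightarrow> bool" where
  "spec_approx A t B \<longleftrightarrow> (exp (- t) *\<^sub>R A \<preceq>\<^sub>L B \<and> B \<preceq>\<^sub>L exp t *\<^sub>R A)"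

definition pinv :: "real^'n^'m \<Rightarrow> real^'m^'n" where
  "pinv A = (THE X. A ** X ** A = A \<and> X ** A ** X = X \<and>
                    transpose (A ** X) = A ** X \<and> transpose (X ** A) = X ** A)"

definition restr :: "real^'n^'m \<Rightarrow> 'm set \<Rightarrow> 'n set \<Rightarrow> real^'n^'m" where
  "restr A R C = (\<chi> i j. if i \<in> R \<and> j \<in> C then A $ i $ j else 0)"

text \<open>Schur complement SC(L,C) of a matrix L supported on U onto C \<subseteq> U, F = U - C:
  L_CC - L_CF L_FF^{-1} L_FC (all blocks zero-padded; the pseudoinverse of the
  zero-padded block L_FF is the zero-padded pseudoinverse of L_FF).\<close>
definition schur :: "real^'n^'n \<Rightarrow> 'n set \<Rightarrow> 'n set \<Rightarrow> real^'n^'n" where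
  "schur L U C = (let F = U - C in
      restr L C C - restr L C F ** pinv (restr L F F) ** restr L F C)"

definition energy :: "real^'n^'n \<Rightarrow> real^'n \<Rightarrow> real" where
  "energy L d = d \<bullet> (pinv L *v d)"

definition laplacian_on :: "real^'n^'n \<Rightarrow> 'n set \<Rightarrow> bool" where
  "laplacian_on A U \<longleftrightarrow> transpose A = A
     \<and> (\<forall>i j. i \<noteq> j \<longrightarrow> A $ i $ j \<le> 0)
     \<and> (\<forall>i. (\<Sum>j\<in>UNIV. A $ i $ j) = 0)
     \<and> (\<forall>i j. (i \<notin> U \<or> j \<notin> U) \<longrightarrow> A $ i $ j = 0)"

definition conn_laplacian_on :: "real^'n^'n \<Rightarrow> 'n set \<Rightarrow> bool" where
  "conn_laplacian_on A U \<longleftrightarrow> laplacian_on A U \<and>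
     (\<forall>u\<in>U. \<forall>v\<in>U. (u, v) \<in> {(i, j). i \<in> U \<and> j \<in> U \<and> i \<noteq> j \<and> A $ i $ j < 0}\<^sup>*)"

text \<open>A graph with vertex type 'v and edge type 'e; each edge e has endpoints
  ends e = (tail, head), used to fix the orientation of the signed incidence matrix.\<close>
definition incidence :: "('e \<Rightarrow> 'v \<times> 'v) \<Rightarrow> real^'v^'e" where
  "incidence ends = (\<chi> e v. if v = fst (ends e) then 1 else if v = snd (ends e) then -1 else 0)"

definition graph_connected :: "('e \<Rightarrow> 'v \<times> 'v) \<Rightarrow> bool" where
  "graph_connected ends \<longleftrightarrow>
     (\<forall>u v. (u, v) \<in> {(a, b). \<exists>e. ends e = (a, b) \<or> ends e = (b, a)}\<^sup>*)"

definition wdiag :: "('e \<Rightarrow> real) \<Rightarrow> real^'e^'e" where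
  "wdiag w = (\<chi> i j. if i = j then w i else 0)"

text \<open>SLeaf EH bdH  (leaf, S(H) = {}) and  SNode EH bdH S(H) D1 D2.\<close>
datatype ('v, 'e) stree =
    SLeaf "'e set" "'v set"
  | SNode "'e set" "'v set" "'v set" "('v, 'e) stree" "('v, 'e) stree"

fun st_edges :: "('v, 'e) stree \<Rightarrow> 'e set" where
  "st_edges (SLeaf E b) = E"
| "st_edges (SNode E b S D1 D2) = E"

fun st_bd :: "('v, 'e) stree \<Rightarrow> 'v set" where
  "st_bd (SLeaf E b) = b"
| "st_bd (SNode E b S D1 D2) = b"

fun st_sep :: "('v, 'e) stree \<Rightarrow> 'v set" where
  "st_sep (SLeaf E b) = {}"
| "st_sep (SNode E b S D1 D2) = S"

definition st_verts :: "('e \<Rightarrow> 'v \<times> 'v) \<Rightarrow> ('v, 'e) stree \<Rightarrow> 'v set" where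
  "st_verts ends H = {v. \<exists>e\<in>st_edges H. v = fst (ends e) \<or> v = snd (ends e)}"

fun st_F :: "('e \<Rightarrow> 'v \<times> 'v) \<Rightarrow> ('v, 'e) stree \<Rightarrow> 'v set" where
  "st_F ends (SLeaf E b) = st_verts ends (SLeaf E b) - b"
| "st_F ends (SNode E b S D1 D2) = S - b"

fun st_level :: "('v, 'e) stree \<Rightarrow> nat" where
  "st_level (SLeaf E b) = 0"
| "st_level (SNode E b S D1 D2) = Suc (max (st_level D1) (st_level D2))"

fun st_nodes :: "('v, 'e) stree \<Rightarrow> ('v, 'e) stree set" where
  "st_nodes (SLeaf E b) = {SLeaf E b}"
| "st_nodes (SNode E b S D1 D2) = insert (SNode E b S D1 D2) (st_nodes D1 \<union> st_nodes D2)"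

fun st_wf :: "('e \<Rightarrow> 'v \<times> 'v) \<Rightarrow> ('v, 'e) stree \<Rightarrow> bool" where
  "st_wf ends (SLeaf E b) = True"
| "st_wf ends (SNode E b S D1 D2) =
     (st_edges D1 \<inter> st_edges D2 = {} \<and> st_edges D1 \<union> st_edges D2 = E
      \<and> st_verts ends D1 \<inter> st_verts ends D2 = S
      \<and> st_bd D1 = (b \<union> S) \<inter> st_verts ends D1
      \<and> st_bd D2 = (b \<union> S) \<inter> st_verts ends D2
      \<and> st_wf ends D1 \<and> st_wf ends D2)"

definition separator_tree :: "('e \<Rightarrow> 'v \<times> 'v) \<Rightarrow> ('v, 'e) stree \<Rightarrow> bool" where
  "separator_tree ends T \<longleftrightarrow> st_edges T = UNIV \<and> st_bd T = {} \<and> st_wf ends T"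

definition Bsub :: "('e \<Rightarrow> 'v \<times> 'v) \<Rightarrow> ('v, 'e) stree \<Rightarrow> real^'v^'e" where
  "Bsub ends H = (\<chi> e v. if e \<in> st_edges H then incidence ends $ e $ v else 0)"

text \<open>sct D is the given approximate Schur complement ~SC(L^(D), \<partial>D).\<close>
fun recL :: "('e::finite \<Rightarrow> 'v::finite \<times> 'v) \<Rightarrow> ('e \<Rightarrow> real) \<Rightarrow> (('v, 'e) stree \<Rightarrow> real^'v^'v)
              \<Rightarrow> ('v, 'e) stree \<Rightarrow> real^'v^'v" where
  "recL ends w sct (SLeaf E b) =
     transpose (Bsub ends (SLeaf E b)) ** wdiag w ** Bsub ends (SLeaf E b)"
| "recL ends w sct (SNode E b S D1 D2) = sct D1 + sct D2"

definition edge_op :: "('e::finite \<Rightarrow> 'v::finite \<times> 'v) \<Rightarrow> ('e \<Rightarrow> real) \<Rightarrow> (('v, 'e) stree \<Rightarrow> real^'v^'v)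
              \<Rightarrow> ('v, 'e) stree \<Rightarrow> real^'v^'v" where
  "edge_op ends w sct D = pinv (recL ends w sct D) ** sct D"

fun recM :: "('e::finite \<Rightarrow> 'v::finite \<times> 'v) \<Rightarrow> ('e \<Rightarrow> real) \<Rightarrow> (('v, 'e) stree \<Rightarrow> real^'v^'v)
              \<Rightarrow> ('v, 'e) stree \<Rightarrow> real^'v^'e" where
  "recM ends w sct (SLeaf E b) = wdiag (\<lambda>e. sqrt (w e)) ** Bsub ends (SLeaf E b)"
| "recM ends w sct (SNode E b S D1 D2) =
     recM ends w sct D1 ** edge_op ends w sct D1 + recM ends w sct D2 ** edge_op ends w sct D2"

end

theory Submission
  imports Defs
begin

text \<open>At a leaf \<open>\<parallel>W\<^sup>1\<^sup>/\<^sup>2 B z\<parallel>\<^sup>2 = z\<^sup>T L z\<close> exactly.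
  At an inner node the two summands of \<open>M\<^sup>(\<^sup>H\<^sup>) z\<close> live on the disjoint edge sets of the
  children, so their squared norms add. For a child \<open>D\<close> let \<open>S\<close> be its approximate Schur
  complement and \<open>x = (L\<^sup>(\<^sup>D\<^sup>))\<^sup>+ S z\<close>. A Schur complement is dominated by the matrix itself,
  so \<open>e\<^sup>-\<^sup>\<epsilon> S \<preceq> SC(L\<^sup>(\<^sup>D\<^sup>), \<partial>D) \<preceq> L\<^sup>(\<^sup>D\<^sup>)\<close>, and this gives \<open>x\<^sup>T L\<^sup>(\<^sup>D\<^sup>) x \<le> e\<^sup>\<epsilon> z\<^sup>T S z\<close>.
  Hence every level costs one factor \<open>e\<^sup>\<epsilon>\<close>, and the two children's \<open>z\<^sup>T S z\<close> add up to
  \<open>z\<^sup>T L\<^sup>(\<^sup>H\<^sup>) z\<close>. The energy identity is \<open>L L\<^sup>+ L = L\<close>.\<close>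

lemma matrix_diff_ldistrib: "(A::real^'n^'m) ** (B - C) = A ** B - A ** C"
  by (simp add: matrix_matrix_mult_def vec_eq_iff sum_subtractf algebra_simps)

lemma matrix_diff_rdistrib: "((A::real^'n^'m) - B) ** C = A ** C - B ** C"
  by (simp add: matrix_matrix_mult_def vec_eq_iff sum_subtractf algebra_simps)

lemma matrix_add_rdistrib: "((A::real^'n^'m) + B) ** C = A ** C + B ** C"
  by (simp add: matrix_matrix_mult_def vec_eq_iff sum.distrib algebra_simps)

lemma transpose_diff: "transpose ((A::real^'n^'m) - B) = transpose A - transpose B"
  by (simp add: transpose_def vec_eq_iff)

lemma transpose_zero [simp]: "transpose (0::real^'n^'m) = 0"
  by (simp add: transpose_def vec_eq_iff)

lemma inner_matrix_vector_transpose: "x \<bullet> ((A::real^'n^'m) *v y) = (transpose A *v x) \<bullet> y"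
  by (simp add: dot_lmul_matrix[symmetric])

lemma inner_symmetric_matrix: "transpose A = A \<Longrightarrow> x \<bullet> ((A::real^'n^'n) *v y) = (A *v x) \<bullet> y"
  by (metis inner_matrix_vector_transpose)

lemma orthogonal_projector_exists:
  fixes K :: "(real^'n) set"
  assumes "subspace K"
  obtains Q :: "real^'n^'n"
  where "transpose Q = Q" "\<And>x. Q *v x \<in> K" "\<And>x. x \<in> K \<Longrightarrow> Q *v x = x"
proof -
  obtain Bs where Bs: "pairwise orthogonal Bs" "\<And>x. x \<in> Bs \<Longrightarrow> norm x = 1"
      "independent Bs" "span Bs = K"
    using orthonormal_basis_subspace[OF assms] by metis
  have fin: "finite Bs" using Bs(3) independent_imp_finite by blast
  define Q :: "real^'n^'n" where "Q = (\<chi> i j. \<Sum>b\<in>Bs. b$i * b$j)"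
  have Qv: "Q *v x = (\<Sum>b\<in>Bs. (x \<bullet> b) *\<^sub>R b)" for x
    unfolding Q_def
    by (simp add: vec_eq_iff matrix_vector_mult_def inner_vec_def
        sum_distrib_left sum_distrib_right mult_ac sum.swap[of _ Bs])
  show thesis
  proof
    show "transpose Q = Q" unfolding Q_def transpose_def by (simp add: vec_eq_iff mult.commute)
    show "Q *v x \<in> K" for x
      unfolding Qv by (metis (no_types, lifting) Bs(4) span_base span_scale span_sum)
    show "x \<in> K \<Longrightarrow> Q *v x = x" for x
      unfolding Qv using orthonormal_basis_expand[OF Bs(1,2) _ fin] Bs(4) by auto
  qed
qed

definition penrose_inverse :: "real^'n^'m \<Rightarrow> real^'m^'n \<Rightarrow> bool" where
  "penrose_inverse A X \<longleftrightarrow> A ** X ** A = A \<and> X ** A ** X = X \<and>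
     transpose (A ** X) = A ** X \<and> transpose (X ** A) = X ** A"

lemma penrose_inverse_unique:
  assumes "penrose_inverse A X" "penrose_inverse A Y" shows "X = Y"
proof -
  have X: "A ** X ** A = A" "X ** A ** X = X" "transpose (A ** X) = A ** X" "transpose (X ** A) = X ** A"
    using assms(1) by (auto simp: penrose_inverse_def)
  have Y: "A ** Y ** A = A" "Y ** A ** Y = Y" "transpose (A ** Y) = A ** Y" "transpose (Y ** A) = Y ** A"
    using assms(2) by (auto simp: penrose_inverse_def)
  have "X = X ** transpose (A ** X)" using X by (simp add: matrix_mul_assoc)
  also have "\<dots> = X ** (transpose X ** (transpose A ** transpose Y ** transpose A))"
    using Y by (metis matrix_transpose_mul matrix_mul_assoc)
  also have "\<dots> = X ** (transpose (A ** X) ** transpose (A ** Y))"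
    by (simp add: matrix_transpose_mul matrix_mul_assoc)
  also have "\<dots> = X ** A ** Y" using X Y by (simp add: matrix_mul_assoc)
  finally have XAY: "X = X ** A ** Y" .
  have "Y = transpose (Y ** A) ** Y" using Y by (simp add: matrix_mul_assoc)
  also have "\<dots> = ((transpose A ** transpose X ** transpose A) ** transpose Y) ** Y"
    using X by (metis matrix_transpose_mul matrix_mul_assoc)
  also have "\<dots> = (transpose (X ** A) ** transpose (Y ** A)) ** Y"
    by (simp add: matrix_transpose_mul matrix_mul_assoc)
  also have "\<dots> = X ** A ** Y ** A ** Y" using X Y by (simp add: matrix_mul_assoc)
  also have "\<dots> = X ** A ** Y" using Y by (metis matrix_mul_assoc)
  finally show ?thesis using XAY by simp
qed

lemma penrose_inverse_exists_symmetric: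
  fixes A :: "real^'n^'n"
  assumes sym: "transpose A = A"
  shows "\<exists>X. penrose_inverse A X"
proof -
  define K where "K = {x. A *v x = 0}"
  have "subspace K" unfolding K_def subspace_def
    by (simp add: matrix_vector_right_distrib matrix_vector_mult_scaleR)
  then obtain Q where Q: "transpose Q = Q" "\<And>x. Q *v x \<in> K" "\<And>x. x \<in> K \<Longrightarrow> Q *v x = x"
    using orthogonal_projector_exists by blast
  have AQ: "A ** Q = 0"
    by (simp add: matrix_eq matrix_vector_mul_assoc[symmetric]) (use Q(2) K_def in auto)
  have QA: "Q ** A = 0"
    by (metis AQ Q(1) sym matrix_transpose_mul transpose_zero)
  have QQ: "Q ** Q = Q"
    by (simp add: matrix_eq matrix_vector_mul_assoc[symmetric] Q(2,3))
  text \<open>\<open>A + Q\<close> is invertible, and \<open>(A + Q)\<^sup>-\<^sup>1 - Q\<close> is the pseudoinverse of \<open>A\<close>.\<close>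
  have "inj ((*v) (A + Q))"
  proof (rule injI)
    fix x y assume "(A + Q) *v x = (A + Q) *v y"
    then have "(A + Q) *v (x - y) = 0" by (simp add: matrix_vector_mult_diff_distrib)
    then have Au: "A *v (x - y) = - (Q *v (x - y))"
      by (simp add: matrix_vector_mult_add_rdistrib eq_neg_iff_add_eq_0)
    then have "A *v (x - y) \<in> K" using Q(2)[of "x - y"] \<open>subspace K\<close> by (simp add: subspace_neg)
    then have "A *v (A *v (x - y)) = 0" by (simp add: K_def)
    then have "(A *v (x - y)) \<bullet> (A *v (x - y)) = 0"
      using inner_symmetric_matrix[OF sym, of "x - y" "A *v (x - y)"] by simp
    then have "x - y \<in> K" "Q *v (x - y) = 0" using Au by (auto simp: K_def)
    then show "x = y" using Q(3) by force
  qed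
  then obtain B where B: "B ** (A + Q) = mat 1" using matrix_left_invertible_injective by blast
  then have B': "(A + Q) ** B = mat 1" using matrix_left_right_inverse by blast
  have "(A + Q) ** Q = Q" "Q ** (A + Q) = Q"
    by (simp_all add: matrix_add_rdistrib matrix_add_ldistrib AQ QA QQ)
  then have BQ: "B ** Q = Q" and QB: "Q ** B = Q"
    by (metis B matrix_mul_assoc matrix_mul_lid, metis B' matrix_mul_assoc matrix_mul_rid)
  have AB: "A ** B = mat 1 - Q" using B' by (simp add: matrix_add_rdistrib QB algebra_simps)
  have BA: "B ** A = mat 1 - Q" using B by (simp add: matrix_add_ldistrib BQ algebra_simps)
  have AX: "A ** (B - Q) = mat 1 - Q" and XA: "(B - Q) ** A = mat 1 - Q"
    by (simp_all add: matrix_diff_ldistrib matrix_diff_rdistrib AB BA AQ QA)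
  have "penrose_inverse A (B - Q)"
    unfolding penrose_inverse_def AX XA
    by (simp add: matrix_diff_rdistrib matrix_diff_ldistrib QA QB QQ transpose_diff Q(1))
  then show ?thesis ..
qed

lemma pinv_penrose_inverse:
  fixes A :: "real^'n^'n"
  assumes "transpose A = A" shows "penrose_inverse A (pinv A)"
proof -
  have "\<exists>!X. penrose_inverse A X"
    using penrose_inverse_exists_symmetric[OF assms] penrose_inverse_unique by blast
  then show ?thesis unfolding pinv_def penrose_inverse_def[symmetric] by (rule theI')
qed

lemma pinv_symmetric:
  fixes A :: "real^'n^'n"
  assumes sym: "transpose A = A" shows "transpose (pinv A) = pinv A"
proof -
  have "penrose_inverse A (transpose (pinv A))"
    using pinv_penrose_inverse[OF sym] unfolding penrose_inverse_def
    by (metis matrix_transpose_mul sym transpose_transpose matrix_mul_assoc)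
  then show ?thesis using pinv_penrose_inverse[OF sym] penrose_inverse_unique by blast
qed

lemma pinv_commute:
  fixes A :: "real^'n^'n"
  assumes sym: "transpose A = A" shows "A ** pinv A = pinv A ** A"
  using pinv_penrose_inverse[OF sym] pinv_symmetric[OF sym] unfolding penrose_inverse_def
  by (metis matrix_transpose_mul sym)

lemma quadratic_form_eq_energy:
  fixes L :: "real^'n^'n"
  assumes sym: "transpose L = L"
  shows "z \<bullet> (L *v z) = energy L (L *v z)"
proof -
  have "L ** pinv L ** L = L" using pinv_penrose_inverse[OF sym] by (simp add: penrose_inverse_def)
  then have "L *v (pinv L *v (L *v z)) = L *v z"
    by (simp only: matrix_vector_mul_assoc matrix_mul_assoc)
  moreover have "energy L (L *v z) = z \<bullet> (L *v (pinv L *v (L *v z)))"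
    unfolding energy_def by (simp add: inner_symmetric_matrix[OF sym])
  ultimately show ?thesis by simp
qed

lemma laplacian_matrix_psd:
  fixes A :: "real^'n^'n"
  assumes sym: "transpose A = A" and off: "\<forall>i j. i \<noteq> j \<longrightarrow> A$i$j \<le> 0"
    and rows: "\<forall>i. (\<Sum>j\<in>UNIV. A$i$j) = 0"
  shows "0 \<le> x \<bullet> (A *v x)"
proof -
  have Aji: "A$j$i = A$i$j" for i j using sym by (metis transpose_def vec_lambda_beta)
  have q: "x \<bullet> (A *v x) = (\<Sum>i\<in>UNIV. \<Sum>j\<in>UNIV. A$i$j * x$i * x$j)"
    by (simp add: inner_vec_def matrix_vector_mult_def sum_distrib_left mult_ac)
  have sq_i: "(\<Sum>i\<in>UNIV. \<Sum>j\<in>UNIV. A$i$j * (x$i)^2) = 0"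
    by (simp add: sum_distrib_right[symmetric] rows)
  have sq_j: "(\<Sum>i\<in>UNIV. \<Sum>j\<in>UNIV. A$i$j * (x$j)^2) = 0"
    by (subst sum.swap) (simp add: Aji sum_distrib_right[symmetric] rows)
  text \<open>The quadratic form is \<open>-1/2 \<Sum>\<^sub>i\<^sub>j A\<^sub>i\<^sub>j (x\<^sub>i - x\<^sub>j)\<^sup>2\<close>.\<close>
  have "(\<Sum>i\<in>UNIV. \<Sum>j\<in>UNIV. A$i$j * (x$i - x$j)^2)
      = (\<Sum>i\<in>UNIV. \<Sum>j\<in>UNIV. A$i$j * (x$i)^2) - 2 * (\<Sum>i\<in>UNIV. \<Sum>j\<in>UNIV. A$i$j * x$i * x$j)
        + (\<Sum>i\<in>UNIV. \<Sum>j\<in>UNIV. A$i$j * (x$j)^2)"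
    by (simp add: power2_diff algebra_simps sum.distrib sum_subtractf sum_distrib_left)
  then have "(\<Sum>i\<in>UNIV. \<Sum>j\<in>UNIV. A$i$j * (x$i - x$j)^2) = - 2 * (x \<bullet> (A *v x))"
    using sq_i sq_j q by simp
  moreover have "(\<Sum>i\<in>UNIV. \<Sum>j\<in>UNIV. A$i$j * (x$i - x$j)^2) \<le> 0"
    by (intro sum_nonpos) (metis off mult_nonpos_nonneg zero_le_power2 diff_self
        power2_eq_square mult_zero_right order_refl)
  ultimately show ?thesis by simp
qed

lemma laplacian_on_psd: "laplacian_on A U \<Longrightarrow> 0 \<le> x \<bullet> (A *v x)"
  unfolding laplacian_on_def using laplacian_matrix_psd by blast

lemma quadratic_form_scaleR: "x \<bullet> (((c::real) *\<^sub>R A) *v x) = c * (x \<bullet> (A *v (x::real^'n)))"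
  by (simp add: scaleR_matrix_vector_assoc[symmetric])

lemma spec_approx_quadratic_form:
  assumes "spec_approx A t B"
  shows "exp (- t) * (x \<bullet> (A *v x)) \<le> x \<bullet> (B *v x)" "x \<bullet> (B *v x) \<le> exp t * (x \<bullet> (A *v x))"
  using assms by (simp_all add: spec_approx_def loewner_le_def quadratic_form_scaleR)

lemma spec_approx_negative_parameter:
  assumes "spec_approx A t B" "t < 0"
  shows "x \<bullet> (A *v x) \<le> 0"
proof -
  have "exp (- t) * (x \<bullet> (A *v x)) \<le> exp t * (x \<bullet> (A *v x))"
    using spec_approx_quadratic_form[OF assms(1)] by (rule order_trans)
  moreover have "exp t < exp (- t)" using assms(2) by simp
  ultimately show ?thesis by (smt (verit) mult_strict_right_mono)
qed

definition restrict_vec :: "'n set \<Rightarrow> real^'n \<Rightarrow> real^'n" where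
  "restrict_vec S v = (\<chi> i. if i \<in> S then v$i else 0)"

lemma restr_mult_vector: "restr L R C *v v = restrict_vec R (L *v restrict_vec C v)"
  unfolding vec_eq_iff
proof
  fix i show "(restr L R C *v v)$i = restrict_vec R (L *v restrict_vec C v) $ i"
    by (cases "i \<in> R") (auto simp: restr_def restrict_vec_def matrix_vector_mult_def intro!: sum.cong)
qed

lemma inner_restrict_vec: "restrict_vec S a \<bullet> b = a \<bullet> restrict_vec S b"
  unfolding inner_vec_def restrict_vec_def by (rule sum.cong) auto

lemma transpose_restr_diagonal_block: "transpose L = L \<Longrightarrow> transpose (restr L S S) = restr L S S"
  unfolding restr_def transpose_def by (simp add: vec_eq_iff)

text \<open>For positive semidefinite \<open>L\<close>, the \<open>F\<close>-part of any \<open>L c\<close> lies in the range of the block \<open>L\<^sub>F\<^sub>F\<close>: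
  otherwise its component \<open>r\<close> in the kernel of \<open>L\<^sub>F\<^sub>F\<close> would make \<open>t \<mapsto> (c + t r)\<^sup>T L (c + t r)\<close>
  affine with nonzero slope.\<close>
lemma psd_block_range:
  fixes L :: "real^'n^'n" and F :: "'n set" and c :: "real^'n"
  assumes sym: "transpose L = L" and psd: "\<forall>x. 0 \<le> x \<bullet> (L *v x)"
  defines "A \<equiv> restr L F F" and "b \<equiv> restrict_vec F (L *v c)"
  shows "A *v (pinv A *v b) = b"
proof -
  define r where "r = b - A *v (pinv A *v b)"
  have symA: "transpose A = A" unfolding A_def by (rule transpose_restr_diagonal_block[OF sym])
  have Av: "A *v v = restrict_vec F (L *v restrict_vec F v)" for v
    unfolding A_def by (simp add: restr_mult_vector)
  have "A ** pinv A ** A = A" using pinv_penrose_inverse[OF symA] by (simp add: penrose_inverse_def)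
  then have "A *v (A *v (pinv A *v b)) = A *v b"
    by (simp add: matrix_vector_mul_assoc pinv_commute[OF symA] matrix_mul_assoc)
  then have Ar: "A *v r = 0" by (simp add: r_def matrix_vector_mult_diff_distrib)
  have "r \<bullet> (A *v (pinv A *v b)) = 0" by (simp add: inner_symmetric_matrix[OF symA] Ar)
  then have rr: "r \<bullet> r = r \<bullet> b" by (simp add: r_def inner_diff_right)
  have Fr: "restrict_vec F r = r" by (simp add: r_def b_def Av vec_eq_iff restrict_vec_def)
  have slope: "(L *v c) \<bullet> r = r \<bullet> r" by (metis rr Fr inner_restrict_vec b_def inner_commute)
  have flat: "r \<bullet> (L *v r) = 0" by (metis Ar Av Fr inner_restrict_vec inner_zero_right)
  have affine: "0 \<le> c \<bullet> (L *v c) + 2 * t * (r \<bullet> r)" for t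
  proof -
    have "0 \<le> (c + t *\<^sub>R r) \<bullet> (L *v (c + t *\<^sub>R r))" using psd by blast
    also have "\<dots> = c \<bullet> (L *v c) + 2 * t * ((L *v c) \<bullet> r) + t * t * (r \<bullet> (L *v r))"
      by (simp add: matrix_vector_right_distrib matrix_vector_mult_scaleR inner_add_left
          inner_add_right inner_symmetric_matrix[OF sym, of r c] algebra_simps inner_commute)
    finally show ?thesis by (simp add: slope flat)
  qed
  have "r = 0"
  proof (rule ccontr)
    assume "r \<noteq> 0"
    then have "r \<bullet> r > 0" by simp
    then have "2 * (- (\<bar>c \<bullet> (L *v c)\<bar> + 1) / (2 * (r \<bullet> r))) * (r \<bullet> r) = - (\<bar>c \<bullet> (L *v c)\<bar> + 1)"
      by simp
    then show False using affine[of "- (\<bar>c \<bullet> (L *v c)\<bar> + 1) / (2 * (r \<bullet> r))"] by linarith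
  qed
  then show ?thesis by (simp add: r_def)
qed

lemma schur_quadratic_form:
  fixes L :: "real^'n^'n" and U C :: "'n set" and x :: "real^'n"
  assumes sym: "transpose L = L"
  defines "F \<equiv> U - C" and "c \<equiv> restrict_vec C x"
  defines "b \<equiv> restrict_vec F (L *v c)"
  shows "x \<bullet> (schur L U C *v x) = c \<bullet> (L *v c) - b \<bullet> (pinv (restr L F F) *v b)"
proof -
  have "x \<bullet> (restr L C F *v u) = b \<bullet> u" for u
  proof -
    have "x \<bullet> (restr L C F *v u) = c \<bullet> (L *v restrict_vec F u)"
      by (simp add: restr_mult_vector c_def inner_restrict_vec[symmetric])
    also have "\<dots> = b \<bullet> u" by (simp add: inner_symmetric_matrix[OF sym] b_def inner_restrict_vec)
    finally show ?thesis .
  qed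
  moreover have "x \<bullet> (restr L C C *v x) = c \<bullet> (L *v c)"
    by (simp add: restr_mult_vector c_def inner_restrict_vec[symmetric])
  moreover have "restr L F C *v x = b" by (simp add: restr_mult_vector b_def c_def)
  ultimately show ?thesis
    unfolding schur_def Let_def F_def[symmetric]
    by (simp add: matrix_vector_mult_diff_rdistrib inner_diff_right matrix_vector_mul_assoc[symmetric])
qed

lemma quadratic_form_block_split:
  fixes L :: "real^'n^'n" and U C :: "'n set" and x :: "real^'n"
  assumes sym: "transpose L = L" and supp: "\<forall>i j. (i \<notin> U \<or> j \<notin> U) \<longrightarrow> L$i$j = 0"
  defines "F \<equiv> U - C" and "c \<equiv> restrict_vec C x"
  defines "b \<equiv> restrict_vec F (L *v c)"
  shows "x \<bullet> (L *v x) = c \<bullet> (L *v c) + 2 * (b \<bullet> x) + x \<bullet> (restr L F F *v x)"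
proof -
  define f where "f = restrict_vec F x"
  have "L *v (x - c - f) = 0"
    unfolding c_def f_def F_def
    by (auto simp: vec_eq_iff matrix_vector_mult_def restrict_vec_def supp intro!: sum.neutral)
  then have Lx: "L *v x = L *v c + L *v f"
    by (simp add: matrix_vector_mult_diff_distrib diff_eq_eq add.commute)
  have cf: "c \<bullet> (L *v f) = b \<bullet> x"
    by (simp add: inner_symmetric_matrix[OF sym] b_def f_def inner_restrict_vec)
  have fc: "f \<bullet> (L *v c) = b \<bullet> x"
    by (metis b_def f_def inner_restrict_vec inner_commute)
  have ff: "f \<bullet> (L *v f) = x \<bullet> (restr L F F *v x)"
    by (simp add: restr_mult_vector f_def inner_restrict_vec)
  have "x \<bullet> (L *v x) = (L *v c) \<bullet> x + (L *v f) \<bullet> x"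
    by (simp add: Lx inner_add_right inner_commute)
  also have "\<dots> = c \<bullet> (L *v x) + f \<bullet> (L *v x)"
    by (simp add: inner_symmetric_matrix[OF sym])
  finally show ?thesis by (simp add: Lx inner_add_right cf fc ff)
qed

text \<open>Completing the square: \<open>x\<^sup>T L x - x\<^sup>T SC(L, C) x = (x + y)\<^sup>T L\<^sub>F\<^sub>F (x + y)\<close> with
  \<open>y = L\<^sub>F\<^sub>F\<^sup>+ L\<^sub>F\<^sub>C x\<close>.\<close>
lemma schur_le:
  fixes L :: "real^'n^'n"
  assumes sym: "transpose L = L" and psd: "\<forall>x. 0 \<le> x \<bullet> (L *v x)"
    and supp: "\<forall>i j. (i \<notin> U \<or> j \<notin> U) \<longrightarrow> L$i$j = 0"
  shows "x \<bullet> (schur L U C *v x) \<le> x \<bullet> (L *v x)"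
proof -
  define F where "F = U - C"
  define A where "A = restr L F F"
  define b where "b = restrict_vec F (L *v restrict_vec C x)"
  define y where "y = pinv A *v b"
  have symA: "transpose A = A" unfolding A_def by (rule transpose_restr_diagonal_block[OF sym])
  have Ay: "A *v y = b" unfolding y_def A_def b_def by (rule psd_block_range[OF sym psd])
  have "0 \<le> (x + y) \<bullet> (A *v (x + y))"
    unfolding A_def by (simp add: restr_mult_vector inner_restrict_vec[symmetric] psd)
  also have "\<dots> = x \<bullet> (A *v x) + 2 * (b \<bullet> x) + b \<bullet> y"
    by (simp add: matrix_vector_right_distrib inner_add_left inner_add_right Ay
        inner_symmetric_matrix[OF symA, of y x] inner_commute)
  finally show ?thesis
    using schur_quadratic_form[OF sym, of x U C] quadratic_form_block_split[OF sym supp, of x C]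
    by (simp add: A_def b_def y_def F_def)
qed

text \<open>The vector \<open>x = L\<^sup>+ S z\<close> solves \<open>L x = S z\<close> in the least-squares sense, so
  \<open>x\<^sup>T L x = 2 z\<^sup>T S x - x\<^sup>T L x \<le> 2 z\<^sup>T S x - c x\<^sup>T S x\<close>, which is at most \<open>z\<^sup>T S z / c\<close> since
  \<open>(c x - z)\<^sup>T S (c x - z) \<ge> 0\<close>.\<close>
lemma pinv_image_quadratic_le:
  fixes L S :: "real^'n^'n"
  assumes symL: "transpose L = L" and symS: "transpose S = S"
    and psdS: "\<forall>x. 0 \<le> x \<bullet> (S *v x)" and c: "c > 0" and le: "c *\<^sub>R S \<preceq>\<^sub>L L"
  shows "(pinv L *v (S *v z)) \<bullet> (L *v (pinv L *v (S *v z))) \<le> z \<bullet> (S *v z) / c"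
proof -
  define x where "x = pinv L *v (S *v z)"
  have "pinv L ** L ** pinv L = pinv L"
    using pinv_penrose_inverse[OF symL] by (simp add: penrose_inverse_def)
  then have "pinv L *v (L *v x) = x"
    unfolding x_def by (simp only: matrix_vector_mul_assoc matrix_mul_assoc)
  then have Lx: "x \<bullet> (L *v x) = z \<bullet> (S *v x)"
    by (metis x_def inner_symmetric_matrix[OF pinv_symmetric[OF symL]] inner_symmetric_matrix[OF symS]
        inner_commute)
  have "c * (x \<bullet> (S *v x)) \<le> x \<bullet> (L *v x)"
    using le by (simp add: loewner_le_def quadratic_form_scaleR)
  then have lo: "c * (c * (x \<bullet> (S *v x))) \<le> c * (z \<bullet> (S *v x))"
    using c Lx by (simp add: mult_left_mono)
  have "0 \<le> (c *\<^sub>R x - z) \<bullet> (S *v (c *\<^sub>R x - z))" using psdS by blast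
  then have "0 \<le> c * (c * (x \<bullet> (S *v x))) - 2 * (c * (z \<bullet> (S *v x))) + z \<bullet> (S *v z)"
    by (simp add: matrix_vector_mult_diff_distrib matrix_vector_mult_scaleR inner_diff_left
        inner_diff_right inner_symmetric_matrix[OF symS, of x z] algebra_simps inner_commute)
  then have "c * (x \<bullet> (L *v x)) \<le> z \<bullet> (S *v z)"
    using lo by (simp add: Lx)
  then show ?thesis using c by (simp add: x_def pos_le_divide_eq mult.commute)
qed

lemma spec_approx_schur_loewner_le:
  fixes L S :: "real^'n^'n"
  assumes Llap: "laplacian_on L U" and approx: "spec_approx S \<epsilon> (schur L U C)"
  shows "exp (- \<epsilon>) *\<^sub>R S \<preceq>\<^sub>L L"
  unfolding loewner_le_def quadratic_form_scaleR
proof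
  fix x
  have psd: "\<forall>x. 0 \<le> x \<bullet> (L *v x)" using laplacian_on_psd[OF Llap] by blast
  have "transpose L = L" and "\<forall>i j. (i \<notin> U \<or> j \<notin> U) \<longrightarrow> L$i$j = 0"
    using Llap by (simp_all add: laplacian_on_def)
  then have "x \<bullet> (schur L U C *v x) \<le> x \<bullet> (L *v x)" by (rule schur_le[OF _ psd])
  then show "exp (- \<epsilon>) * (x \<bullet> (S *v x)) \<le> x \<bullet> (L *v x)"
    using spec_approx_quadratic_form(1)[OF approx] order_trans by blast
qed

lemma norm_bound_step:
  fixes L S :: "real^'n^'n"
  assumes Llap: "laplacian_on L U" and Slap: "laplacian_on S C"
    and approx: "spec_approx S \<epsilon> (schur L U C)"
    and IH: "\<And>x. (norm (M *v x))\<^sup>2 \<le> exp (real k * \<epsilon>) * (x \<bullet> (L *v x))"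
    and "k < n"
  shows "(norm (M *v (pinv L *v (S *v z))))\<^sup>2 \<le> exp (real n * \<epsilon>) * (z \<bullet> (S *v z))"
proof -
  define x where "x = pinv L *v (S *v z)"
  have symL: "transpose L = L" and symS: "transpose S = S"
    using Llap Slap by (simp_all add: laplacian_on_def)
  have "x \<bullet> (L *v x) \<le> z \<bullet> (S *v z) / exp (- \<epsilon>)"
    unfolding x_def using spec_approx_schur_loewner_le[OF Llap approx]
    by (rule pinv_image_quadratic_le[OF symL symS allI[OF laplacian_on_psd[OF Slap]] exp_gt_zero])
  then have "x \<bullet> (L *v x) \<le> exp \<epsilon> * (z \<bullet> (S *v z))"
    by (simp add: exp_minus divide_inverse mult.commute)
  then have "exp (real k * \<epsilon>) * (x \<bullet> (L *v x)) \<le> exp (real k * \<epsilon>) * (exp \<epsilon> * (z \<bullet> (S *v z)))"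
    by (rule mult_left_mono) simp
  with IH[of x] have "(norm (M *v x))\<^sup>2 \<le> exp (real k * \<epsilon>) * (exp \<epsilon> * (z \<bullet> (S *v z)))"
    by (rule order_trans)
  also have "\<dots> = exp (real (Suc k) * \<epsilon>) * (z \<bullet> (S *v z))"
    by (simp add: distrib_right exp_add)
  also have "\<dots> \<le> exp (real n * \<epsilon>) * (z \<bullet> (S *v z))"
  proof (cases "\<epsilon> \<ge> 0")
    case True
    then have "real (Suc k) * \<epsilon> \<le> real n * \<epsilon>"
      using \<open>k < n\<close> by (intro mult_right_mono) auto
    then show ?thesis using laplacian_on_psd[OF Slap] by (intro mult_right_mono) auto
  next
    case False
    then have "z \<bullet> (S *v z) = 0"
      using spec_approx_negative_parameter[OF approx] laplacian_on_psd[OF Slap]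
      by (simp add: order_antisym)
    then show ?thesis by simp
  qed
  finally show ?thesis by (simp add: x_def)
qed

lemma st_nodes_self: "H \<in> st_nodes H"
  by (cases H) auto

lemma st_nodes_subset: "H \<in> st_nodes T \<Longrightarrow> st_nodes H \<subseteq> st_nodes T"
  by (induction T) auto

lemma st_wf_nodes: "st_wf ends T \<Longrightarrow> H \<in> st_nodes T \<Longrightarrow> st_wf ends H"
  by (induction T) auto

lemma st_nodes_size: "H \<in> st_nodes T \<Longrightarrow> size H \<le> size T"
  by (induction T) auto

lemma recM_row_outside_edges:
  "st_wf ends H \<Longrightarrow> e \<notin> st_edges H \<Longrightarrow> recM ends w sct H $ e = 0"
proof (induction H)
  case (SLeaf E b)
  then show ?case
    by (auto simp: vec_eq_iff matrix_matrix_mult_def wdiag_def Bsub_def intro!: sum.neutral)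
next
  case (SNode E b S D1 D2)
  then have "recM ends w sct D1 $ e = 0" "recM ends w sct D2 $ e = 0" by auto
  then show ?case by (simp add: vec_eq_iff matrix_matrix_mult_def)
qed

lemma recM_children_orthogonal:
  assumes "st_wf ends (SNode E b S D1 D2)"
  shows "(recM ends w sct D1 *v x) \<bullet> (recM ends w sct D2 *v y) = 0"
  unfolding inner_vec_def
proof (intro sum.neutral ballI)
  fix e
  have "recM ends w sct D1 $ e = 0 \<or> recM ends w sct D2 $ e = 0"
    using assms recM_row_outside_edges[of ends D1 e w sct] recM_row_outside_edges[of ends D2 e w sct]
    by auto
  then show "(recM ends w sct D1 *v x) $ e \<bullet> (recM ends w sct D2 *v y) $ e = 0"
    by (auto simp: matrix_vector_mult_def)
qed

lemma wdiag_mult_vector: "wdiag f *v y = (\<chi> e. f e * y$e)"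
  unfolding vec_eq_iff matrix_vector_mult_def wdiag_def
  by (auto simp: if_distrib[of "\<lambda>t. t * _"] cong: if_cong)

lemma recM_leaf_norm:
  assumes "\<forall>e. w e \<ge> 0"
  shows "(norm (recM ends w sct (SLeaf E b) *v z))\<^sup>2 = z \<bullet> (recL ends w sct (SLeaf E b) *v z)"
proof -
  define y where "y = Bsub ends (SLeaf E b) *v z"
  have "(norm (recM ends w sct (SLeaf E b) *v z))\<^sup>2 = (\<Sum>e\<in>UNIV. (sqrt (w e) * y$e)^2)"
    unfolding power2_norm_eq_inner
    by (simp add: y_def matrix_vector_mul_assoc[symmetric] wdiag_mult_vector inner_vec_def
        power2_eq_square)
  also have "\<dots> = (\<Sum>e\<in>UNIV. w e * (y$e)^2)"
    using assms by (simp add: power_mult_distrib)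
  also have "\<dots> = y \<bullet> (wdiag w *v y)"
    by (simp add: wdiag_mult_vector inner_vec_def power2_eq_square mult_ac)
  also have "\<dots> = z \<bullet> (transpose (Bsub ends (SLeaf E b)) *v (wdiag w *v y))"
    by (metis inner_matrix_vector_transpose transpose_transpose y_def)
  also have "\<dots> = z \<bullet> (recL ends w sct (SLeaf E b) *v z)"
    by (simp add: y_def matrix_vector_mul_assoc matrix_mul_assoc)
  finally show ?thesis .
qed

lemma recM_norm_bound:
  fixes ends :: "'e::finite \<Rightarrow> 'v::finite \<times> 'v"
  assumes wnonneg: "\<forall>e. w e \<ge> 0" and wf: "st_wf ends T"
    and sct_lap: "\<forall>D\<in>st_nodes T. laplacian_on (sct D) (st_bd D)"
    and L_lap: "\<forall>H\<in>st_nodes T. laplacian_on (recL ends w sct H) (st_bd H \<union> st_F ends H)"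
    and approx: "\<forall>D\<in>st_nodes T - {T}.
        spec_approx (sct D) \<epsilon> (schur (recL ends w sct D) (st_bd D \<union> st_F ends D) (st_bd D))"
    and "H \<in> st_nodes T"
  shows "(norm (recM ends w sct H *v z))\<^sup>2
           \<le> exp (real (st_level H) * \<epsilon>) * (z \<bullet> (recL ends w sct H *v z))"
  using \<open>H \<in> st_nodes T\<close>
proof (induction H arbitrary: z)
  case (SLeaf E b)
  have "(norm (recM ends w sct (SLeaf E b) *v z))\<^sup>2 = z \<bullet> (recL ends w sct (SLeaf E b) *v z)"
    by (rule recM_leaf_norm[OF wnonneg])
  then show ?case by (simp del: recM.simps recL.simps)
next
  case (SNode E b S D1 D2)
  let ?H = "SNode E b S D1 D2" and ?n = "st_level (SNode E b S D1 D2)"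
  have children: "D1 \<in> st_nodes T - {T}" "D2 \<in> st_nodes T - {T}"
    using st_nodes_subset[OF SNode.prems] st_nodes_size[OF SNode.prems] st_nodes_self by auto
  have child_bound: "(norm (recM ends w sct D *v (edge_op ends w sct D *v z)))\<^sup>2
      \<le> exp (real ?n * \<epsilon>) * (z \<bullet> (sct D *v z))"
    if "D \<in> st_nodes T - {T}" "st_level D < ?n"
      and "\<And>x. (norm (recM ends w sct D *v x))\<^sup>2
           \<le> exp (real (st_level D) * \<epsilon>) * (x \<bullet> (recL ends w sct D *v x))" for D
    unfolding edge_op_def matrix_vector_mul_assoc[symmetric]
    using that L_lap sct_lap approx
    by (intro norm_bound_step[where U="st_bd D \<union> st_F ends D" and C="st_bd D" and k="st_level D"])
      auto
  have "(norm (recM ends w sct ?H *v z))\<^sup>2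
      = (norm (recM ends w sct D1 *v (edge_op ends w sct D1 *v z)))\<^sup>2
        + (norm (recM ends w sct D2 *v (edge_op ends w sct D2 *v z)))\<^sup>2"
    using recM_children_orthogonal[OF st_wf_nodes[OF wf SNode.prems]]
    by (simp add: matrix_vector_mult_add_rdistrib matrix_vector_mul_assoc[symmetric]
        norm_add_Pythagorean orthogonal_def)
  also have "\<dots> \<le> exp (real ?n * \<epsilon>) * (z \<bullet> (sct D1 *v z)) + exp (real ?n * \<epsilon>) * (z \<bullet> (sct D2 *v z))"
    using children SNode.IH by (intro add_mono child_bound) auto
  also have "\<dots> = exp (real ?n * \<epsilon>) * (z \<bullet> (recL ends w sct ?H *v z))"
    by (simp add: matrix_vector_mult_add_rdistrib inner_add_right distrib_left)
  finally show ?case .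
qed

theorem mainTheorem12:
  fixes ends :: "'e::finite \<Rightarrow> 'v::finite \<times> 'v"
    and w :: "'e \<Rightarrow> real"
    and T :: "('v, 'e) stree"
    and sct :: "('v, 'e) stree \<Rightarrow> real^'v^'v"
    and \<epsilon> :: real
  assumes loopless: "\<forall>e. fst (ends e) \<noteq> snd (ends e)"
    and conn: "graph_connected ends"
    and wpos: "\<forall>e. w e > 0"
    and tree: "separator_tree ends T"
    and sct_lap: "\<forall>D\<in>st_nodes T. laplacian_on (sct D) (st_bd D)"
    and L_conn: "\<forall>H\<in>st_nodes T. conn_laplacian_on (recL ends w sct H) (st_bd H \<union> st_F ends H)"
    and approx: "\<forall>D\<in>st_nodes T - {T}.
        spec_approx (sct D) \<epsilon> (schur (recL ends w sct D) (st_bd D \<union> st_F ends D) (st_bd D))"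
    and H: "H \<in> st_nodes T"
  shows "(norm (recM ends w sct H *v z))\<^sup>2
           \<le> exp (real (st_level H) * \<epsilon>) * (z \<bullet> (recL ends w sct H *v z))
         \<and> z \<bullet> (recL ends w sct H *v z)
           = energy (recL ends w sct H) (recL ends w sct H *v z)"
proof
  have L_lap: "\<forall>H\<in>st_nodes T. laplacian_on (recL ends w sct H) (st_bd H \<union> st_F ends H)"
    using L_conn by (simp add: conn_laplacian_on_def)
  show "(norm (recM ends w sct H *v z))\<^sup>2
           \<le> exp (real (st_level H) * \<epsilon>) * (z \<bullet> (recL ends w sct H *v z))"
    using recM_norm_bound[OF _ _ sct_lap L_lap approx H] wpos tree
    by (simp add: separator_tree_def less_imp_le)
  show "z \<bullet> (recL ends w sct H *v z) = energy (recL ends w sct H) (recL ends w sct H *v z)"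
    using L_lap H by (intro quadratic_form_eq_energy) (simp add: laplacian_on_def)
qed

end
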